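(* Let $\rho:\mathbb{N}\times\mathbb{N}\to\mathbb{N}$ be a bijection that is monotonic in the sense that $\rho(a,b)\le\rho(c,d)$ whenever $a\le c$ and $b\le d$. Define the infinite matrix $\mathbf{A}=[a(n,k)]_{n,k\ge 0}$ and infinite vectors $\mathbf{x}=[x(k)]_{k\ge0}$, $\mathbf{b}=[b(n)]_{n\ge 0}$ by $a(n,k)=c(u,v,i,j)$, $x(k)=f(i,j)$, and $b(n)=1$ if $u=v=1$, $b(n)=0$ otherwise, where $(u,v)=\rho^{-1}(n)$ and $(i,j)=\rho^{-1}(k)$. Then (i) $\mathbf{A}$ is lower-triangular with all diagonal entries equal to $1$; (ii) $\mathbf{A}\mathbf{x}=\mathbf{b}$ (each row sum $\sum_k a(n,k)x(k)$ having only finitely many nonzero terms).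
   Context: $F(m;\,n_1,n_2)$ denotes the number of lattice walks from $(0,0)$ to $(n_1,n_2)$ that always stay in the first quadrant $\{(a,b): a\ge 0,\ b\ge 0\}$ and have exactly $m$ steps, each belonging to $\{(1,0),(-1,0),(1,1),(-1,-1)\}$; by convention $F(m;\,n_1,n_2)=0$ if $m<0$, $n_1<0$ or $n_2<0$. Define $\widetilde F(m;\,n_1,0)=F(m-1;\,n_1,0)$ and $\widetilde F(m;\,0,n_2)=F(m-1;\,0,n_2)+F(m-1;\,0,n_2-1)$ for $m,n_1,n_2\ge 0$ (these agree at $n_1=n_2=0$). Define for $i,j\ge 0$: $f(i,j)=\widetilde F(i;\,0,j-i)$ if $i\le j$, and $f(i,j)=\widetilde F(j;\,i-j,0)$ if $i\ge j$. For $u,v,i,j\ge0$ define $c(u,v,i,j)=\binom{-\min\{i,j\}}{\frac{u-i}{2}}\binom{-\min\{i,j\}}{v-j-\frac{u-i}{2}}$ if $i\equiv u\pmod 2$ and $c(u,v,i,j)=0$ otherwise, where for integers $a,k$, $\binom{a}{k}=\frac{a(a-1)\cdots(a-k+1)}{k!}$ if $k\ge0$ and $\binom{a}{k}=0$ if $k<0$. *)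

theory Defs
  imports Main
begin

definition steps :: "(int \<times> int) set" where
  "steps = {(1,0), (-1,0), (1,1), (-1,-1)}"

definition qwalks :: "nat \<Rightarrow> int \<Rightarrow> int \<Rightarrow> (int \<times> int) list set" where
  "qwalks m n1 n2 = {w. length w = m \<and> set w \<subseteq> steps \<and>
      (\<forall>j\<le>m. 0 \<le> sum_list (map fst (take j w)) \<and> 0 \<le> sum_list (map snd (take j w))) \<and>
      sum_list (map fst w) = n1 \<and> sum_list (map snd w) = n2}"

definition F :: "int \<Rightarrow> int \<Rightarrow> int \<Rightarrow> int" where
  "F m n1 n2 = (if m < 0 \<or> n1 < 0 \<or> n2 < 0 then 0 else int (card (qwalks (nat m) n1 n2)))"

definition Ft_x :: "int \<Rightarrow> int \<Rightarrow> int" where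
  "Ft_x m n1 = F (m - 1) n1 0"

definition Ft_y :: "int \<Rightarrow> int \<Rightarrow> int" where
  "Ft_y m n2 = F (m - 1) 0 n2 + F (m - 1) 0 (n2 - 1)"

definition f :: "nat \<Rightarrow> nat \<Rightarrow> int" where
  "f i j = (if i \<le> j then Ft_y (int i) (int j - int i) else Ft_x (int j) (int i - int j))"

text \<open>Generalized binomial with integer upper and lower argument (0 for negative lower);
  a(a-1)...(a-k+1)/k!, the division being exact.\<close>
definition binom :: "int \<Rightarrow> int \<Rightarrow> int" where
  "binom a k = (if k < 0 then 0 else (\<Prod>i<nat k. a - int i) div fact (nat k))"

definition c :: "nat \<Rightarrow> nat \<Rightarrow> nat \<Rightarrow> nat \<Rightarrow> int" where
  "c u v i j = (if even (int u - int i)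
      then binom (- int (min i j)) ((int u - int i) div 2)
         * binom (- int (min i j)) (int v - int j - (int u - int i) div 2)
      else 0)"

definition matA :: "(nat \<times> nat \<Rightarrow> nat) \<Rightarrow> nat \<Rightarrow> nat \<Rightarrow> int" where
  "matA \<rho> n k = (case inv \<rho> n of (u, v) \<Rightarrow> case inv \<rho> k of (i, j) \<Rightarrow> c u v i j)"

definition vecx :: "(nat \<times> nat \<Rightarrow> nat) \<Rightarrow> nat \<Rightarrow> int" where
  "vecx \<rho> k = (case inv \<rho> k of (i, j) \<Rightarrow> f i j)"

definition vecb :: "(nat \<times> nat \<Rightarrow> nat) \<Rightarrow> nat \<Rightarrow> int" where
  "vecb \<rho> n = (if inv \<rho> n = (1, 1) then 1 else 0)"

end

theory Submission
  imports Defs "HOL-Computational_Algebra.Formal_Power_Series"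
begin

text \<open>
  Let Q_n = \<Sum> F(n;u,v) x^u y^v and P = (1 + x^2 y)(1 + y), which is xy times the step
  polynomial x + 1/x + xy + 1/(xy). Appending a last step to the walks of length n gives
  xy Q_(n+1) = P Q_n - R_(n+1), where R_m accounts for the walks whose last step leaves the
  quadrant; the coefficients of (xy)^m R_m are the values of f on the hook min(i,j) = m.
  Multiplying by (xy)^(n+1) P^-(n+1) and telescoping gives
  \<Sum>_(n<N) (xy)^(n+1) P^-(n+1) R_(n+1) = xy - (xy)^(N+1) P^-N Q_N.
  The coefficients of P^-s are the numbers c(u,v,i,j) with min(i,j) = s, so comparing the
  coefficients of x^u y^v for N = u yields \<Sum>_(i,j) c(u,v,i,j) f(i,j) = [u = v = 1].
  Since c(u,v,i,j) vanishes unless i \<le> u and j \<le> v, monotonicity of \<rho> makes the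
  matrix lower triangular.
\<close>

lemma of_int_binom:
  assumes "k \<ge> 0"
  shows "(of_int (binom a k) :: 'a::field_char_0) = of_int a gchoose nat k"
  using assms of_int_gbinomial[of a "nat k", where 'a='a]
  by (simp add: binom_def gbinomial_prod_rev lessThan_atLeast0)

lemma binom_negative [simp]: "k < 0 \<Longrightarrow> binom a k = 0"
  by (simp add: binom_def)

lemma binom_0 [simp]: "binom a 0 = 1"
  by (simp add: binom_def)

lemma binom_0_left: "binom 0 k = (if k = 0 then 1 else 0)"
proof -
  have "(of_int (binom 0 k) :: rat) = of_int (if k = 0 then 1 else 0)"
    by (cases "k < 0") (auto simp: of_int_binom gbinomial_0_left)
  then show ?thesis by (simp only: of_int_eq_iff)
qed

lemma binom_pascal: "binom r k = binom (r - 1) k + binom (r - 1) (k - 1)"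
proof (cases "k \<le> 0")
  case True
  then show ?thesis by (cases "k = 0") auto
next
  case False
  then have "nat k = Suc (nat (k - 1))" by simp
  then have "(of_int (binom r k) :: rat) = of_int (binom (r - 1) k + binom (r - 1) (k - 1))"
    using False gbinomial_Suc_Suc[of "of_int (r - 1) :: rat" "nat (k - 1)"]
    by (simp add: of_int_binom add.commute)
  then show ?thesis by (simp only: of_int_eq_iff)
qed

lemma qwalks_negative: "a < 0 \<or> b < 0 \<Longrightarrow> qwalks n a b = {}"
  unfolding qwalks_def by (auto dest!: spec[where x=n])

lemma finite_qwalks: "finite (qwalks n a b)"
proof -
  have "qwalks n a b \<subseteq> {w. set w \<subseteq> steps \<and> length w = n}" unfolding qwalks_def by auto
  moreover have "finite steps" by (simp add: steps_def)
  ultimately show ?thesis using finite_lists_length_eq finite_subset by blast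
qed

lemma F_of_nat: "F (int n) a b = int (card (qwalks n a b))"
  by (auto simp: F_def qwalks_negative)

lemma F_negative: "m < 0 \<or> a < 0 \<or> b < 0 \<Longrightarrow> F m a b = 0"
  by (auto simp: F_def)

lemma F_0: "F 0 a b = (if a = 0 \<and> b = 0 then 1 else 0)"
proof -
  have "qwalks 0 a b = (if a = 0 \<and> b = 0 then {[]} else {})"
    by (auto simp: qwalks_def)
  then show ?thesis using F_of_nat[of 0 a b] by simp
qed

lemma qwalks_Suc:
  assumes "a \<ge> 0" "b \<ge> 0"
  shows "qwalks (Suc n) a b = (\<lambda>(s, w). w @ [s]) ` (SIGMA s:steps. qwalks n (a - fst s) (b - snd s))"
proof
  show "qwalks (Suc n) a b \<subseteq> (\<lambda>(s, w). w @ [s]) ` (SIGMA s:steps. qwalks n (a - fst s) (b - snd s))"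
  proof
    fix w assume w: "w \<in> qwalks (Suc n) a b"
    then have len: "length w = Suc n" by (simp add: qwalks_def)
    then have "w \<noteq> []" by auto
    then have w_snoc: "w = butlast w @ [last w]" and "last w \<in> set w" by simp_all
    then have "last w \<in> steps" using w by (auto simp: qwalks_def)
    moreover have "butlast w \<in> qwalks n (a - fst (last w)) (b - snd (last w))"
    proof -
      have "\<And>j. j \<le> n \<Longrightarrow> take j (butlast w) = take j w"
        using len by (simp add: take_butlast)
      moreover have "sum_list (map fst w) = sum_list (map fst (butlast w)) + fst (last w)"
        "sum_list (map snd w) = sum_list (map snd (butlast w)) + snd (last w)"
        by (subst w_snoc, simp)+
      ultimately show ?thesis using w len unfolding qwalks_def
        by (auto dest: in_set_butlastD)
    qed
    ultimately show "w \<in> (\<lambda>(s, w). w @ [s]) ` (SIGMA s:steps. qwalks n (a - fst s) (b - snd s))"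
      using w_snoc by (auto intro!: image_eqI[where x="(last w, butlast w)"])
  qed
next
  show "(\<lambda>(s, w). w @ [s]) ` (SIGMA s:steps. qwalks n (a - fst s) (b - snd s)) \<subseteq> qwalks (Suc n) a b"
  proof clarify
    fix s1 s2 w
    assume s: "(s1, s2) \<in> steps" and w: "w \<in> qwalks n (a - fst (s1, s2)) (b - snd (s1, s2))"
    have len: "length w = n" using w by (simp add: qwalks_def)
    have "0 \<le> sum_list (map fst (take j (w @ [(s1, s2)])))
        \<and> 0 \<le> sum_list (map snd (take j (w @ [(s1, s2)])))" if "j \<le> Suc n" for j
    proof (cases "j = Suc n")
      case True
      then show ?thesis using len w assms by (simp add: qwalks_def)
    next
      case False
      then have "take j (w @ [(s1, s2)]) = take j w" using that len by simp
      then show ?thesis using w that False by (simp add: qwalks_def)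
    qed
    then show "w @ [(s1, s2)] \<in> qwalks (Suc n) a b"
      using s w len by (simp add: qwalks_def)
  qed
qed

lemma F_Suc:
  assumes "a \<ge> 0" "b \<ge> 0"
  shows "F (int n + 1) a b
    = F (int n) (a - 1) b + F (int n) (a + 1) b + F (int n) (a - 1) (b - 1) + F (int n) (a + 1) (b + 1)"
proof -
  have "inj_on (\<lambda>(s, w). w @ [s]) (SIGMA s:steps. qwalks n (a - fst s) (b - snd s))"
    by (auto simp: inj_on_def)
  moreover have "finite steps" by (simp add: steps_def)
  ultimately have "card (qwalks (Suc n) a b) = (\<Sum>s\<in>steps. card (qwalks n (a - fst s) (b - snd s)))"
    by (simp add: qwalks_Suc[OF assms] card_image finite_qwalks)
  moreover have "F (int n + 1) a b = int (card (qwalks (Suc n) a b))"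
    using F_of_nat[of "Suc n"] by (simp add: add.commute)
  ultimately show ?thesis
    by (simp add: steps_def F_of_nat)
qed

text \<open>
  \<open>coeff2 A u v\<close> is the coefficient of x^u y^v in \<open>A\<close>, the inner series being in x;
  it is \<open>0\<close> for negative exponents, so multiplication by \<open>x\<close> or \<open>y\<close> is an unconditional shift.
\<close>
definition coeff2 :: "int fps fps \<Rightarrow> int \<Rightarrow> int \<Rightarrow> int" where
  "coeff2 A u v = (if u < 0 \<or> v < 0 then 0 else fps_nth (fps_nth A (nat v)) (nat u))"

definition bivariate_fps :: "(int \<Rightarrow> int \<Rightarrow> int) \<Rightarrow> int fps fps" where
  "bivariate_fps g = Abs_fps (\<lambda>v. Abs_fps (\<lambda>u. g (int u) (int v)))"

abbreviation x_fps :: "int fps fps" where "x_fps \<equiv> fps_const fps_X"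
abbreviation y_fps :: "int fps fps" where "y_fps \<equiv> fps_X"

definition xy_fps :: "int fps fps" where "xy_fps = x_fps * y_fps"

lemma coeff2_bivariate_fps: "u \<ge> 0 \<Longrightarrow> v \<ge> 0 \<Longrightarrow> coeff2 (bivariate_fps g) u v = g u v"
  by (simp add: coeff2_def bivariate_fps_def)

lemma coeff2_bivariate_fps_eq:
  "(\<And>a b. a < 0 \<or> b < 0 \<Longrightarrow> g a b = 0) \<Longrightarrow> coeff2 (bivariate_fps g) u v = g u v"
  by (cases "u < 0 \<or> v < 0") (auto simp: coeff2_def bivariate_fps_def)

lemma coeff2_eqI: "(\<And>u v. u \<ge> 0 \<Longrightarrow> v \<ge> 0 \<Longrightarrow> coeff2 A u v = coeff2 B u v) \<Longrightarrow> A = B"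
proof (intro fps_ext)
  fix u v
  assume "\<And>u v. u \<ge> 0 \<Longrightarrow> v \<ge> 0 \<Longrightarrow> coeff2 A u v = coeff2 B u v"
  from this[of "int u" "int v"] show "fps_nth (fps_nth A v) u = fps_nth (fps_nth B v) u"
    by (simp add: coeff2_def)
qed

lemma coeff2_0 [simp]: "coeff2 0 u v = 0"
  by (simp add: coeff2_def)

lemma coeff2_1: "coeff2 1 u v = (if u = 0 \<and> v = 0 then 1 else 0)"
  by (auto simp: coeff2_def)

lemma coeff2_add [simp]: "coeff2 (A + B) u v = coeff2 A u v + coeff2 B u v"
  by (simp add: coeff2_def)

lemma coeff2_diff [simp]: "coeff2 (A - B) u v = coeff2 A u v - coeff2 B u v"
  by (simp add: coeff2_def)

lemma coeff2_sum: "coeff2 (sum g S) u v = (\<Sum>n\<in>S. coeff2 (g n) u v)"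
  by (induction S rule: infinite_finite_induct) simp_all

lemma coeff2_x_mult: "coeff2 (x_fps * A) u v = coeff2 A (u - 1) v"
  by (auto simp: coeff2_def nat_diff_distrib)

lemma coeff2_y_mult: "coeff2 (y_fps * A) u v = coeff2 A u (v - 1)"
  by (auto simp: coeff2_def nat_diff_distrib)

lemma coeff2_xy_mult: "coeff2 (xy_fps * A) u v = coeff2 A (u - 1) (v - 1)"
  by (simp add: xy_fps_def mult.assoc coeff2_x_mult coeff2_y_mult)

lemma coeff2_xy_power_mult: "coeff2 (xy_fps ^ m * A) u v = coeff2 A (u - int m) (v - int m)"
proof (induction m arbitrary: u v)
  case (Suc m)
  have "coeff2 (xy_fps * (xy_fps ^ m * A)) u v = coeff2 A (u - 1 - int m) (v - 1 - int m)"
    by (simp only: coeff2_xy_mult Suc.IH)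
  then show ?case by (simp add: mult.assoc algebra_simps)
qed simp

lemma coeff2_mult:
  "coeff2 (A * B) (int u) (int v) =
     (\<Sum>k\<le>v. \<Sum>l\<le>u. coeff2 A (int l) (int k) * coeff2 B (int u - int l) (int v - int k))"
proof -
  have "coeff2 (A * B) (int u) (int v) = (\<Sum>k\<le>v. fps_nth (fps_nth A k * fps_nth B (v - k)) u)"
    by (simp add: coeff2_def fps_mult_nth fps_sum_nth atLeast0AtMost)
  also have "\<dots> = (\<Sum>k\<le>v. \<Sum>l\<le>u. coeff2 A (int l) (int k) * coeff2 B (int u - int l) (int v - int k))"
    by (intro sum.cong) (auto simp: fps_mult_nth atLeast0AtMost coeff2_def nat_diff_distrib)
  finally show ?thesis .
qed

definition walk_poly :: "int fps fps" where
  "walk_poly = (1 + x_fps * (x_fps * y_fps)) * (1 + y_fps)"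

lemma coeff2_walk_poly_mult:
  "coeff2 (walk_poly * A) u v
     = coeff2 A u v + coeff2 A u (v - 1) + coeff2 A (u - 2) (v - 1) + coeff2 A (u - 2) (v - 2)"
proof -
  have "walk_poly * A = A + y_fps * A + x_fps * (x_fps * (y_fps * A))
      + x_fps * (x_fps * (y_fps * (y_fps * A)))"
    by (simp add: walk_poly_def algebra_simps)
  then show ?thesis
    by (simp only: coeff2_add coeff2_x_mult coeff2_y_mult) (simp add: algebra_simps)
qed

definition neg_power_coeff :: "nat \<Rightarrow> int \<Rightarrow> int \<Rightarrow> int" where
  "neg_power_coeff s u v =
     (if even u then binom (- int s) (u div 2) * binom (- int s) (v - u div 2) else 0)"

definition walk_poly_neg_power :: "nat \<Rightarrow> int fps fps" where
  "walk_poly_neg_power s = bivariate_fps (neg_power_coeff s)"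

lemma c_eq_neg_power_coeff: "c u v i j = neg_power_coeff (min i j) (int u - int i) (int v - int j)"
  by (simp add: c_def neg_power_coeff_def)

lemma neg_power_coeff_negative: "u < 0 \<or> v < 0 \<Longrightarrow> neg_power_coeff s u v = 0"
  by (cases "u < 0") (auto simp: neg_power_coeff_def)

lemma coeff2_walk_poly_neg_power: "coeff2 (walk_poly_neg_power s) u v = neg_power_coeff s u v"
  unfolding walk_poly_neg_power_def by (rule coeff2_bivariate_fps_eq) (rule neg_power_coeff_negative)

lemma walk_poly_neg_power_0: "walk_poly_neg_power 0 = 1"
  by (rule coeff2_eqI)
     (auto simp: coeff2_walk_poly_neg_power coeff2_1 neg_power_coeff_def binom_0_left)

lemma walk_poly_neg_power_Suc: "walk_poly_neg_power (Suc s) * walk_poly = walk_poly_neg_power s"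
proof (rule coeff2_eqI)
  fix u v :: int
  define B where "B = binom (- int (Suc s))"
  have "- int (Suc s) = - int s - 1" by simp
  then have pascal: "B k + B (k - 1) = binom (- int s) k" for k
    unfolding B_def by (simp only: binom_pascal[of "- int s"])
  let ?a = "neg_power_coeff (Suc s)"
  have "coeff2 (walk_poly_neg_power (Suc s) * walk_poly) u v
      = ?a u v + ?a u (v - 1) + ?a (u - 2) (v - 1) + ?a (u - 2) (v - 2)"
    by (simp add: mult.commute[of "walk_poly_neg_power _"] coeff2_walk_poly_mult
        coeff2_walk_poly_neg_power)
  also have "\<dots> = neg_power_coeff s u v"
  proof (cases "even u")
    case True
    then obtain a where u: "u = 2 * a" by blast
    have "?a u v + ?a u (v - 1) + ?a (u - 2) (v - 1) + ?a (u - 2) (v - 2)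
        = (B a + B (a - 1)) * (B (v - a) + B (v - a - 1))"
      by (simp add: neg_power_coeff_def u B_def algebra_simps)
    then show ?thesis by (simp add: pascal neg_power_coeff_def u)
  qed (simp add: neg_power_coeff_def)
  finally show "coeff2 (walk_poly_neg_power (Suc s) * walk_poly) u v = coeff2 (walk_poly_neg_power s) u v"
    by (simp add: coeff2_walk_poly_neg_power)
qed

definition walks_gf :: "nat \<Rightarrow> int fps fps" where
  "walks_gf n = bivariate_fps (F (int n))"

text \<open>
  The coefficient of x^a y^b in \<open>xy_fps * boundary_gf m\<close> counts the walks of length \<open>m\<close> that
  stay in the quadrant except for a last step to the point (a - 1, b - 1) on the line x = -1 or
  y = -1; by the definitions of \<open>Ft_x\<close> and \<open>Ft_y\<close> this number is a value of \<open>f\<close>.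
\<close>
definition boundary_coeff :: "nat \<Rightarrow> int \<Rightarrow> int \<Rightarrow> int" where
  "boundary_coeff m a b = (if a = 0 \<or> b = 0 then f (m + nat a) (m + nat b) else 0)"

definition boundary_gf :: "nat \<Rightarrow> int fps fps" where
  "boundary_gf m = bivariate_fps (boundary_coeff m)"

lemma coeff2_walks_gf: "coeff2 (walks_gf n) u v = F (int n) u v"
  unfolding walks_gf_def by (rule coeff2_bivariate_fps_eq) (simp add: F_negative)

lemma walks_gf_0: "walks_gf 0 = 1"
  by (rule coeff2_eqI) (simp add: coeff2_walks_gf coeff2_1 F_0)

lemma walks_gf_Suc: "xy_fps * walks_gf (Suc n) = walk_poly * walks_gf n - boundary_gf (Suc n)"
proof (rule coeff2_eqI)
  fix u v :: int
  assume u: "u \<ge> 0" and v: "v \<ge> 0"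
  consider "u = 0" | "u > 0" "v = 0" | "u > 0" "v > 0" using u v by linarith
  then show "coeff2 (xy_fps * walks_gf (Suc n)) u v
    = coeff2 (walk_poly * walks_gf n - boundary_gf (Suc n)) u v"
  proof cases
    case 1
    then show ?thesis using v
      by (simp add: coeff2_xy_mult coeff2_walk_poly_mult coeff2_walks_gf F_negative boundary_gf_def
          coeff2_bivariate_fps boundary_coeff_def f_def Ft_y_def)
  next
    case 2
    then have "\<not> Suc (n + nat u) \<le> Suc n" by simp
    then show ?thesis using 2
      by (simp add: coeff2_xy_mult coeff2_walk_poly_mult coeff2_walks_gf F_negative boundary_gf_def
          coeff2_bivariate_fps boundary_coeff_def f_def Ft_x_def)
  next
    case 3
    then have "F (int n + 1) (u - 1) (v - 1)
        = F (int n) (u - 2) (v - 1) + F (int n) u (v - 1) + F (int n) (u - 2) (v - 2) + F (int n) u v"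
      using F_Suc[of "u - 1" "v - 1" n] by simp
    then show ?thesis using 3
      by (simp add: coeff2_xy_mult coeff2_walk_poly_mult coeff2_walks_gf boundary_gf_def
          coeff2_bivariate_fps boundary_coeff_def add.commute)
  qed
qed

lemma sum_boundary_terms:
  "(\<Sum>n<N. xy_fps ^ Suc n * boundary_gf (Suc n) * walk_poly_neg_power (Suc n))
     = xy_fps - xy_fps ^ Suc N * walk_poly_neg_power N * walks_gf N"
proof (induction N)
  case 0
  then show ?case by (simp add: walk_poly_neg_power_0 walks_gf_0)
next
  case (Suc N)
  have boundary: "boundary_gf (Suc N) = walk_poly * walks_gf N - xy_fps * walks_gf (Suc N)"
    by (simp add: walks_gf_Suc)
  have "xy_fps ^ Suc N * boundary_gf (Suc N) * walk_poly_neg_power (Suc N)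
      = xy_fps ^ Suc N * ((walk_poly_neg_power (Suc N) * walk_poly) * walks_gf N)
        - xy_fps ^ Suc (Suc N) * walk_poly_neg_power (Suc N) * walks_gf (Suc N)"
    by (simp add: boundary algebra_simps)
  also have "\<dots> = xy_fps ^ Suc N * walk_poly_neg_power N * walks_gf N
      - xy_fps ^ Suc (Suc N) * walk_poly_neg_power (Suc N) * walks_gf (Suc N)"
    by (simp add: walk_poly_neg_power_Suc mult.assoc)
  finally show ?case using Suc by simp
qed

lemma f_eq_0_if_min_0: "min i j = 0 \<Longrightarrow> f i j = 0"
  by (auto simp: f_def Ft_x_def Ft_y_def F_negative min_def)

lemma coeff2_boundary_term:
  "coeff2 (xy_fps ^ m * boundary_gf m * walk_poly_neg_power m) (int u) (int v)
     = (\<Sum>k\<le>v. \<Sum>l\<le>u. if min l k = m then c u v l k * f l k else 0)"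
proof -
  have "coeff2 (xy_fps ^ m * boundary_gf m) (int l) (int k)
      * coeff2 (walk_poly_neg_power m) (int u - int l) (int v - int k)
      = (if min l k = m then c u v l k * f l k else 0)" if "l \<le> u" "k \<le> v" for l k
  proof -
    have "coeff2 (xy_fps ^ m * boundary_gf m) (int l) (int k)
        = (if m \<le> l \<and> m \<le> k then boundary_coeff m (int l - int m) (int k - int m) else 0)"
      unfolding coeff2_xy_power_mult boundary_gf_def by (auto simp: coeff2_def bivariate_fps_def)
    then show ?thesis
      by (auto simp: boundary_coeff_def coeff2_walk_poly_neg_power c_eq_neg_power_coeff
          nat_diff_distrib')
  qed
  then show ?thesis
    by (simp add: coeff2_mult)
qed

lemma sum_c_mult_f: "(\<Sum>i\<le>u. \<Sum>j\<le>v. c u v i j * f i j) = (if u = 1 \<and> v = 1 then 1 else 0)"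
proof -
  have hook_sum: "(\<Sum>n<u. if min i j = Suc n then c u v i j * f i j else 0) = c u v i j * f i j"
    if "i \<le> u" for i j
  proof (cases "min i j = 0")
    case True
    then show ?thesis by (simp add: f_eq_0_if_min_0)
  next
    case False
    then have "min i j = Suc n \<longleftrightarrow> n = min i j - 1" for n by auto
    moreover have "min i j - 1 < u" using that False by auto
    ultimately show ?thesis by simp
  qed
  have remainder: "coeff2 (xy_fps ^ Suc u * walk_poly_neg_power u * walks_gf u) (int u) (int v) = 0"
    by (simp only: mult.assoc coeff2_xy_power_mult) (simp add: coeff2_def)
  have "(\<Sum>i\<le>u. \<Sum>j\<le>v. c u v i j * f i j)
      = (\<Sum>j\<le>v. \<Sum>i\<le>u. \<Sum>n<u. if min i j = Suc n then c u v i j * f i j else 0)"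
    by (subst sum.swap) (simp add: hook_sum)
  also have "\<dots> = (\<Sum>n<u. \<Sum>j\<le>v. \<Sum>i\<le>u. if min i j = Suc n then c u v i j * f i j else 0)"
    by (simp only: sum.swap[of _ "{..u}" "{..<u}"] sum.swap[of _ "{..v}" "{..<u}"])
  also have "\<dots> = coeff2 (\<Sum>n<u. xy_fps ^ Suc n * boundary_gf (Suc n)
      * walk_poly_neg_power (Suc n)) (int u) (int v)"
    by (simp only: coeff2_sum coeff2_boundary_term)
  also have "\<dots> = coeff2 xy_fps (int u) (int v)"
    unfolding sum_boundary_terms coeff2_diff remainder by simp
  also have "\<dots> = (if u = 1 \<and> v = 1 then 1 else 0)"
    using coeff2_xy_mult[of 1] by (auto simp: coeff2_1)
  finally show ?thesis .
qed

lemma c_nonzero_imp_le: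
  assumes "c u v i j \<noteq> 0"
  shows "i \<le> u \<and> j \<le> v"
proof -
  from assms have "binom (- int (min i j)) ((int u - int i) div 2) \<noteq> 0"
    and "binom (- int (min i j)) (int v - int j - (int u - int i) div 2) \<noteq> 0"
    by (auto simp: c_def split: if_splits)
  then have "(int u - int i) div 2 \<ge> 0" and "int v - int j - (int u - int i) div 2 \<ge> 0"
    by (metis binom_negative not_le)+
  then show ?thesis by auto
qed

lemma c_diagonal: "c u v u v = 1"
  by (simp add: c_def)

lemma matA_diagonal: "matA \<rho> n n = 1"
  by (simp add: matA_def c_diagonal split: prod.split)

lemma matA_nonzero_imp_le:
  assumes "bij \<rho>"
    and mono: "\<And>a b c d. a \<le> c \<Longrightarrow> b \<le> d \<Longrightarrow> \<rho> (a, b) \<le> \<rho> (c, d)"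
    and "matA \<rho> n k \<noteq> 0"
  shows "k \<le> n"
proof -
  obtain u v i j where uv: "inv \<rho> n = (u, v)" and ij: "inv \<rho> k = (i, j)"
    by (metis surj_pair)
  have "c u v i j \<noteq> 0" using assms(3) by (simp add: matA_def uv ij)
  then have "\<rho> (i, j) \<le> \<rho> (u, v)" using c_nonzero_imp_le mono by blast
  then show "k \<le> n" using uv ij \<open>bij \<rho>\<close> by (metis bij_inv_eq_iff)
qed

lemma row_sum_matA_vecx:
  fixes n :: nat
  assumes "bij \<rho>"
  defines "S \<equiv> {k. matA \<rho> n k * vecx \<rho> k \<noteq> 0}"
  shows "finite S \<and> (\<Sum>k\<in>S. matA \<rho> n k * vecx \<rho> k) = vecb \<rho> n"
proof -
  obtain u v where uv: "inv \<rho> n = (u, v)" by force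
  define R where "R = {..u} \<times> {..v}"
  have inv_\<rho>: "inv \<rho> (\<rho> p) = p" for p using assms(1) by (simp add: bij_is_inj)
  have "S \<subseteq> \<rho> ` R"
  proof
    fix k assume "k \<in> S"
    obtain i j where ij: "inv \<rho> k = (i, j)" by force
    have "c u v i j \<noteq> 0" using \<open>k \<in> S\<close> by (simp add: S_def matA_def uv ij)
    then have "(i, j) \<in> R" using c_nonzero_imp_le by (simp add: R_def)
    then show "k \<in> \<rho> ` R" using ij assms(1) by (metis bij_inv_eq_iff image_eqI)
  qed
  moreover have "finite R" by (simp add: R_def)
  ultimately have "finite S" using finite_subset by blast
  have "(\<Sum>k\<in>S. matA \<rho> n k * vecx \<rho> k) = (\<Sum>k\<in>\<rho> ` R. matA \<rho> n k * vecx \<rho> k)"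
    using \<open>S \<subseteq> \<rho> ` R\<close> \<open>finite R\<close> by (intro sum.mono_neutral_left) (auto simp: S_def)
  also have "\<dots> = (\<Sum>p\<in>R. matA \<rho> n (\<rho> p) * vecx \<rho> (\<rho> p))"
    by (rule sum.reindex[unfolded comp_def]) (use assms(1) in \<open>auto simp: bij_def intro: inj_on_subset\<close>)
  also have "\<dots> = (\<Sum>(i, j)\<in>R. c u v i j * f i j)"
    by (rule sum.cong) (auto simp: matA_def vecx_def inv_\<rho> uv)
  also have "\<dots> = vecb \<rho> n"
    by (simp add: R_def sum.cartesian_product[symmetric] sum_c_mult_f vecb_def uv)
  finally show ?thesis using \<open>finite S\<close> by blast
qed

theorem corollary5:
  fixes \<rho> :: "nat \<times> nat \<Rightarrow> nat"
  assumes "bij \<rho>"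
    and "\<And>a b c d. a \<le> c \<Longrightarrow> b \<le> d \<Longrightarrow> \<rho> (a, b) \<le> \<rho> (c, d)"
  shows "(\<forall>n k. n < k \<longrightarrow> matA \<rho> n k = 0) \<and> (\<forall>n. matA \<rho> n n = 1)
    \<and> (\<forall>n. finite {k. matA \<rho> n k * vecx \<rho> k \<noteq> 0}
         \<and> (\<Sum>k\<in>{k. matA \<rho> n k * vecx \<rho> k \<noteq> 0}. matA \<rho> n k * vecx \<rho> k) = vecb \<rho> n)"
  using matA_nonzero_imp_le[OF assms] matA_diagonal row_sum_matA_vecx[OF assms(1)]
  by (meson not_le)

end
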